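(* Let $M>0$ be a real number (the file size), let $k\ge 1$ be an integer, let $\tau\ge 1$ be a real number and let $d_1,d_2$ be nonnegative integers. Let $L=[L[0],L[1],\dots,L[k-1]]$ be a list of positive real numbers in nondecreasing order, $L[0]\le L[1]\le\cdots\le L[k-1]$. For $i=0,\dots,k-1$ define $$g(i)=\sum_{j=0}^{i-1}L[j] \quad(\text{so } g(0)=0),\qquad f(i)=\frac{M}{L[i](k-i)+g(i)} .$$ For $\beta_e>0$, let the threshold function $\alpha^*(d_1,d_2,\beta_e)$ be the minimum $\alpha\ge 0$ such that the mincut condition $$\sum_{i=0}^{k-1}\min\{L[i]\beta_e,\ \alpha\}\ \ge\ M$$ holds, considered subject to the constraint $\gamma^1=(d_1\tau+d_2)\beta_e\ge\alpha$. Then, for $\beta_e\ge f(k-1)$, $$\alpha^*(d_1,d_2,\beta_e)=\begin{cases}\dfrac{M}{k}, & \beta_e\in[f(0),+\infty),\\[2mm] \dfrac{M-g(i)\beta_e}{k-i}, & \beta_e\in[f(i),f(i-1)),\quad i=1,\dots,k-1,\end{cases}$$ where an interval $[f(i),f(i-1))$ with $f(i)=f(i-1)$ is understood to be empty.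
   Context: Setting: a regenerating-code distributed storage system with storage nodes placed in two racks. A file of size $M$ is stored so that each node holds $\alpha$ data units and any $k$ nodes suffice to recover the file. When a node fails, a newcomer node downloads data from $d=d_1+d_2$ helper nodes: $d_1$ helpers in the first rack and $d_2$ in the second; a helper in the same rack as the newcomer sends $\beta_c=\tau\beta_e$ data units and a helper in the other rack sends $\beta_e$ data units ($\tau\ge1$). The repair bandwidth of a newcomer in the first rack is $\gamma^1=(d_1\tau+d_2)\beta_e$. In the information flow graph, the income of a newcomer is the total weight of the arcs entering it (from its helpers); the file is recoverable iff the minimum over data collectors of the $S$–$DC$ mincut, which equals $\sum_{i}\min\{\text{income}_i,\alpha\}$ over the $k$ newcomers minimizing it, is at least $M$. The list $L$ is the nondecreasing ordering of these $k$ incomes divided by $\beta_e$. The threshold function is the minimal $\alpha$ satisfying the mincut condition. *)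

theory Defs
  imports Complex_Main
begin

definition gsum :: "real list \<Rightarrow> nat \<Rightarrow> real" where
  "gsum L i = (\<Sum>j<i. L ! j)"

definition fthr :: "real list \<Rightarrow> real \<Rightarrow> nat \<Rightarrow> real" where
  "fthr L M i = M / (L ! i * real (length L - i) + gsum L i)"

definition mincut_ok :: "real list \<Rightarrow> real \<Rightarrow> real \<Rightarrow> real \<Rightarrow> bool" where
  "mincut_ok L M \<beta>e \<alpha> \<longleftrightarrow> (\<Sum>i<length L. min (L ! i * \<beta>e) \<alpha>) \<ge> M"

definition gamma1 :: "nat \<Rightarrow> nat \<Rightarrow> real \<Rightarrow> real \<Rightarrow> real" where
  "gamma1 d1 d2 \<tau> \<beta>e = (real d1 * \<tau> + real d2) * \<beta>e"

definition is_min :: "real set \<Rightarrow> real \<Rightarrow> bool" where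
  "is_min S v \<longleftrightarrow> v \<in> S \<and> (\<forall>a\<in>S. v \<le> a)"

definition is_threshold ::
  "real list \<Rightarrow> real \<Rightarrow> nat \<Rightarrow> nat \<Rightarrow> real \<Rightarrow> real \<Rightarrow> real \<Rightarrow> bool" where
  "is_threshold L M d1 d2 \<tau> \<beta>e v \<longleftrightarrow>
     is_min {\<alpha>. 0 \<le> \<alpha> \<and> mincut_ok L M \<beta>e \<alpha>} v \<and>
     (v \<le> gamma1 d1 d2 \<tau> \<beta>e \<longrightarrow>
        is_min {\<alpha>. 0 \<le> \<alpha> \<and> \<alpha> \<le> gamma1 d1 d2 \<tau> \<beta>e \<and> mincut_ok L M \<beta>e \<alpha>} v)"

end

theory Submission
  imports Defs
begin

text \<open>For a fixed \<open>\<beta>\<^sub>e\<close> the mincut sum \<open>\<Sum>\<^sub>j min (L[j] \<beta>\<^sub>e) \<alpha>\<close> is a continuous,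
  nondecreasing, piecewise linear function of \<open>\<alpha>\<close>. On the piece where \<open>\<alpha>\<close> lies between
  \<open>L[i-1] \<beta>\<^sub>e\<close> and \<open>L[i] \<beta>\<^sub>e\<close> it equals \<open>g(i) \<beta>\<^sub>e + (k - i) \<alpha>\<close>, and the affine function
  \<open>g(i) \<beta>\<^sub>e + (k - i) \<alpha>\<close> bounds it from above everywhere. Hence the value of \<open>\<alpha>\<close> on that
  piece solving \<open>g(i) \<beta>\<^sub>e + (k - i) \<alpha> = M\<close> is the least feasible one. The conditions
  \<open>f(i) \<le> \<beta>\<^sub>e < f(i-1)\<close> say precisely that this solution lies on the \<open>i\<close>-th piece. The
  bandwidth constraint \<open>\<alpha> \<le> \<gamma>\<^sup>1\<close> only shrinks the feasible set, so it cannot change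
  a minimum that it does not cut off.\<close>

lemma sum_lessThan_split:
  fixes h :: "nat \<Rightarrow> 'a::comm_monoid_add"
  assumes "i \<le> n"
  shows "(\<Sum>j<n. h j) = (\<Sum>j<i. h j) + (\<Sum>j\<in>{i..<n}. h j)"
  using assms by (simp add: sum.union_disjoint[symmetric] ivl_disj_un_one(2) ivl_disj_int_one)

lemma gsum_Suc: "gsum L (Suc i) = gsum L i + L ! i"
  by (simp add: gsum_def)

lemma gsum_nonneg:
  assumes "\<forall>x\<in>set L. x > 0" and "i \<le> length L"
  shows "0 \<le> gsum L i"
  unfolding gsum_def using assms by (intro sum_nonneg) (auto intro: less_imp_le)

lemma gsum_mult_eq: "gsum L i * \<beta> = (\<Sum>j<i. L ! j * \<beta>)"
  by (simp add: gsum_def sum_distrib_right)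

lemma mincut_sum_le_affine:
  assumes "i \<le> length L"
  shows "(\<Sum>j<length L. min (L ! j * \<beta>) a) \<le> gsum L i * \<beta> + real (length L - i) * a"
proof -
  have "(\<Sum>j<i. min (L ! j * \<beta>) a) \<le> (\<Sum>j<i. L ! j * \<beta>)"
    by (rule sum_mono) simp
  moreover have "(\<Sum>j\<in>{i..<length L}. min (L ! j * \<beta>) a) \<le> (\<Sum>j\<in>{i..<length L}. a)"
    by (rule sum_mono) simp
  ultimately show ?thesis
    using sum_lessThan_split[OF assms, of "\<lambda>j. min (L ! j * \<beta>) a"]
    by (simp add: gsum_mult_eq)
qed

lemma mincut_sum_eq_affine:
  assumes "i \<le> length L"
    and below: "\<forall>j<i. L ! j * \<beta> \<le> a"
    and above: "\<forall>j\<in>{i..<length L}. a \<le> L ! j * \<beta>"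
  shows "(\<Sum>j<length L. min (L ! j * \<beta>) a) = gsum L i * \<beta> + real (length L - i) * a"
proof -
  have "(\<Sum>j<i. min (L ! j * \<beta>) a) = (\<Sum>j<i. L ! j * \<beta>)"
    using below by (intro sum.cong) auto
  moreover have "(\<Sum>j\<in>{i..<length L}. min (L ! j * \<beta>) a) = (\<Sum>j\<in>{i..<length L}. a)"
    using above by (intro sum.cong) auto
  ultimately show ?thesis
    using sum_lessThan_split[OF assms(1), of "\<lambda>j. min (L ! j * \<beta>) a"]
    by (simp add: gsum_mult_eq)
qed

lemma is_min_mincut:
  assumes i: "i < length L" and "0 \<le> v"
    and below: "\<forall>j<i. L ! j * \<beta> \<le> v"
    and above: "\<forall>j\<in>{i..<length L}. v \<le> L ! j * \<beta>"
    and solves: "gsum L i * \<beta> + real (length L - i) * v = M"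
  shows "is_min {\<alpha>. 0 \<le> \<alpha> \<and> mincut_ok L M \<beta> \<alpha>} v"
proof -
  have "mincut_ok L M \<beta> v"
    unfolding mincut_ok_def using mincut_sum_eq_affine[OF less_imp_le[OF i] below above] solves
    by simp
  moreover have "\<not> mincut_ok L M \<beta> a" if "a < v" for a
  proof -
    have "real (length L - i) * a < real (length L - i) * v"
      using that i by simp
    then show ?thesis
      unfolding mincut_ok_def using mincut_sum_le_affine[OF less_imp_le[OF i], of \<beta> a] solves
      by linarith
  qed
  ultimately show ?thesis
    unfolding is_min_def using \<open>0 \<le> v\<close> by (auto simp: not_less[symmetric])
qed

lemma is_threshold_if_is_min:
  assumes "is_min {\<alpha>. 0 \<le> \<alpha> \<and> mincut_ok L M \<beta> \<alpha>} v"
  shows "is_threshold L M d1 d2 \<tau> \<beta> v"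
  using assms unfolding is_threshold_def is_min_def by auto

lemma fthr_denominator_pos:
  assumes "\<forall>x\<in>set L. x > 0" and "i < length L"
  shows "0 < L ! i * real (length L - i) + gsum L i"
  using assms gsum_nonneg[OF assms(1), of i] by (intro add_pos_nonneg) auto

lemma fthr_le_iff:
  assumes "\<forall>x\<in>set L. x > 0" and "i < length L"
  shows "fthr L M i \<le> \<beta> \<longleftrightarrow> M - gsum L i * \<beta> \<le> real (length L - i) * (L ! i * \<beta>)"
  using fthr_denominator_pos[OF assms]
  by (simp add: fthr_def divide_le_eq algebra_simps)

lemma less_fthr_Suc_iff:
  assumes "\<forall>x\<in>set L. x > 0" and "Suc i < length L"
  shows "\<beta> < fthr L M i \<longleftrightarrow>
           real (length L - Suc i) * (L ! i * \<beta>) < M - gsum L (Suc i) * \<beta>"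
proof -
  have "real (length L - i) = real (length L - Suc i) + 1"
    using assms(2) by simp
  then show ?thesis
    using fthr_denominator_pos[OF assms(1), of i] assms(2)
    by (simp add: fthr_def less_divide_eq gsum_Suc algebra_simps)
qed

lemma is_threshold_on_piece:
  fixes L :: "real list" and M \<beta> :: real
  assumes pos: "\<forall>x\<in>set L. x > 0" and "sorted L" and "0 \<le> M" and "0 < \<beta>"
    and i: "i < length L" and lower: "fthr L M i \<le> \<beta>"
    and upper: "i = 0 \<or> \<beta> < fthr L M (i - 1)"
  shows "is_threshold L M d1 d2 \<tau> \<beta> ((M - gsum L i * \<beta>) / real (length L - i))"
    (is "is_threshold _ _ _ _ _ _ ?v")
proof (intro is_threshold_if_is_min is_min_mincut[OF i])
  have k_i: "0 < real (length L - i)"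
    using i by simp
  have mono: "L ! j * \<beta> \<le> L ! j' * \<beta>" if "j \<le> j'" "j' < length L" for j j'
    using that \<open>sorted L\<close> \<open>0 < \<beta>\<close> by (simp add: sorted_nth_mono)
  have "?v \<le> L ! i * \<beta>"
    using lower fthr_le_iff[OF pos i] k_i by (simp add: divide_le_eq mult.commute)
  then show "\<forall>j\<in>{i..<length L}. ?v \<le> L ! j * \<beta>"
    using mono[of i] by (auto intro: order_trans)
  show "gsum L i * \<beta> + real (length L - i) * ?v = M"
    using k_i by simp
  have "(\<forall>j<i. L ! j * \<beta> \<le> ?v) \<and> 0 \<le> ?v"
  proof (cases i)
    case 0
    then show ?thesis
      using \<open>0 \<le> M\<close> by (simp add: gsum_def)
  next
    case (Suc j)
    then have "L ! j * \<beta> < ?v"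
      using upper less_fthr_Suc_iff[OF pos, of j] i k_i by (simp add: less_divide_eq mult.commute)
    moreover have "0 < L ! j * \<beta>"
      using pos i Suc \<open>0 < \<beta>\<close> by simp
    ultimately show ?thesis
      using mono[of _ j] i Suc by (auto simp: less_Suc_eq_le intro: order_trans less_imp_le)
  qed
  then show "\<forall>j<i. L ! j * \<beta> \<le> ?v" and "0 \<le> ?v"
    by simp_all
qed

theorem theorem1:
  fixes M \<tau> \<beta>e :: real and k d1 d2 :: nat and L :: "real list"
  assumes "M > 0" and "k \<ge> 1" and "\<tau> \<ge> 1"
    and "length L = k" and "\<forall>x\<in>set L. x > 0" and "sorted L"
    and "\<beta>e > 0" and "\<beta>e \<ge> fthr L M (k - 1)"
  shows "(\<beta>e \<ge> fthr L M 0 \<longrightarrow> is_threshold L M d1 d2 \<tau> \<beta>e (M / real k)) \<and>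
         (\<forall>i\<in>{1..<k}. fthr L M i \<le> \<beta>e \<and> \<beta>e < fthr L M (i - 1) \<longrightarrow>
            is_threshold L M d1 d2 \<tau> \<beta>e ((M - gsum L i * \<beta>e) / real (k - i)))"
  \<comment> \<open>\<open>\<tau> \<ge> 1\<close> and \<open>\<beta>\<^sub>e \<ge> f(k-1)\<close> are not needed: each case carries its own interval.\<close>
proof (intro conjI impI ballI)
  assume "fthr L M 0 \<le> \<beta>e"
  then show "is_threshold L M d1 d2 \<tau> \<beta>e (M / real k)"
    using is_threshold_on_piece[of L M \<beta>e 0] assms by (simp add: gsum_def)
next
  fix i assume "i \<in> {1..<k}" and "fthr L M i \<le> \<beta>e \<and> \<beta>e < fthr L M (i - 1)"
  then show "is_threshold L M d1 d2 \<tau> \<beta>e ((M - gsum L i * \<beta>e) / real (k - i))"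
    using is_threshold_on_piece[of L M \<beta>e i] assms by simp
qed

end
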